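(* Let $F_1,F_2$ be bijections of $\mathbb F_2^m$ with $F_1(0)=F_2(0)=0$, and $S=STS(\mathcal H^n)$. If the self-embeddings $S\cup F_1(S)$ and $S\cup F_2(S)$ are isomorphic, then the codes $\mathcal C_{F_1}$ and $\mathcal C_{F_2}$ are equivalent.
   Context: $n=2^m-1$; identify $\mathbb F_2^m$ with $GF(2^m)$. $S=STS(\mathcal H^n)$ is the set of 3-subsets $\{a,b,c\}$ of nonzero elements with $a+b+c=0$; $F(S)=\{\{F(a),F(b),F(c)\}:\{a,b,c\}\in S\}$. Self-embeddings $S\cup F_1(S)$, $S\cup F_2(S)$ are isomorphic if there is a permutation $\sigma$ of the nonzero elements with either $\sigma(S)=S,\sigma(F_1(S))=F_2(S)$ or $\sigma(S)=F_2(S),\sigma(F_1(S))=S$. For a bijection $F$ with $F(0)=0$, $\mathcal C_F$ is the binary linear code of length $n$ whose parity-check matrix is the $2m\times n$ matrix whose columns are $\binom{x}{F(x)}$, $x$ ranging over the nonzero vectors of $\mathbb F_2^m$ (coordinates indexed by the nonzero $x$). Two binary codes of length $n$ are equivalent if one is obtained from the other by a coordinate permutation and a translation (for linear codes, equivalently by a coordinate permutation). *)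

theory Defs
  imports "HOL-Analysis.Analysis" "HOL-Library.Z2"
begin

text \<open>The space F_2^m is modelled as bit^'m (m = CARD('m)); the field structure of GF(2^m)
  is not needed. Coordinates of codes of length n = 2^m - 1 are the nonzero vectors.\<close>

definition nonzero_vecs :: "(bit ^ 'm) set" where
  "nonzero_vecs = UNIV - {0}"

definition STS_H :: "(bit ^ 'm) set set" where
  "STS_H = {{a, b, c} | a b c. a \<noteq> 0 \<and> b \<noteq> 0 \<and> c \<noteq> 0 \<and>
              a \<noteq> b \<and> a \<noteq> c \<and> b \<noteq> c \<and> a + b + c = 0}"

definition blocks_image :: "('a \<Rightarrow> 'b) \<Rightarrow> 'a set set \<Rightarrow> 'b set set" where
  "blocks_image F S = (\<lambda>B. F ` B) ` S"

definition self_emb_iso :: "(bit ^ 'm \<Rightarrow> bit ^ 'm) \<Rightarrow> (bit ^ 'm \<Rightarrow> bit ^ 'm) \<Rightarrow> bool" where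
  "self_emb_iso F1 F2 \<longleftrightarrow>
     (\<exists>\<sigma>. bij_betw \<sigma> nonzero_vecs nonzero_vecs \<and>
        ((blocks_image \<sigma> STS_H = STS_H \<and>
          blocks_image \<sigma> (blocks_image F1 STS_H) = blocks_image F2 STS_H) \<or>
         (blocks_image \<sigma> STS_H = blocks_image F2 STS_H \<and>
          blocks_image \<sigma> (blocks_image F1 STS_H) = STS_H)))"

text \<open>The code C_F: binary words of length n indexed by the nonzero vectors, a word being
  identified with its support A. A is a codeword iff the sum of the columns (x, F x), x \<in> A,
  of the parity-check matrix is zero.\<close>
definition code_F :: "(bit ^ 'm \<Rightarrow> bit ^ 'm) \<Rightarrow> (bit ^ 'm) set set" where
  "code_F F = {A. A \<subseteq> nonzero_vecs \<and> (\<Sum>x\<in>A. x) = 0 \<and> (\<Sum>x\<in>A. F x) = 0}"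

text \<open>Equivalence of binary codes (sets of supports of words with coordinate set N):
  a coordinate permutation followed by a translation (symmetric difference with T).\<close>
definition codes_equiv :: "'a set \<Rightarrow> 'a set set \<Rightarrow> 'a set set \<Rightarrow> bool" where
  "codes_equiv N C1 C2 \<longleftrightarrow>
     (\<exists>\<pi> T. bij_betw \<pi> N N \<and> T \<subseteq> N \<and>
        C2 = (\<lambda>c. (\<pi> ` c - T) \<union> (T - \<pi> ` c)) ` C1)"

end

theory Submission
  imports Defs
begin

text \<open>A bijection of the nonzero vectors that maps the Steiner triple system of the Hamming code
  into itself sends each line {a, b, a + b} to a line, hence, extended by 0 \<mapsto> 0, it is additive.
  Both cases of the isomorphism \<sigma> therefore reduce to additivity: in the first case \<sigma> and
  \<pi> = F2\<inverse> \<circ> \<sigma> \<circ> F1 preserve S, in the second case F2\<inverse> \<circ> \<sigma> and \<sigma> \<circ> F1 do. An additive injection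
  g satisfies \<Sum>g(f x) = 0 iff \<Sum>f x = 0, so the coordinate permutation \<pi> maps the
  parity checks of C_F1 onto those of C_F2 (swapped in the second case), i.e. \<pi>(C_F1) = C_F2.\<close>

lemma vec_bit_add_self [simp]: "(x :: bit ^ 'n) + x = 0"
  by (simp add: vec_eq_iff)

lemma vec_bit_add_eq_0_iff: "(x :: bit ^ 'n) + y = 0 \<longleftrightarrow> x = y"
  by (metis add_left_cancel vec_bit_add_self)

lemma zero_notin_STS_H: "B \<in> STS_H \<Longrightarrow> 0 \<notin> B"
  by (auto simp: STS_H_def)

lemma sum_STS_H_block: "B \<in> STS_H \<Longrightarrow> \<Sum>B = 0"
  by (auto simp: STS_H_def add.assoc)

lemma line_in_STS_H:
  assumes "a \<noteq> 0" "b \<noteq> 0" "a \<noteq> b"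
  shows "{a, b, a + b} \<in> (STS_H :: (bit ^ 'm) set set)"
proof -
  have "a + b \<noteq> 0" "a \<noteq> a + b" "b \<noteq> a + b"
    using assms by (simp_all add: vec_bit_add_eq_0_iff)
  moreover have "a + b + (a + b) = 0"
    by simp
  ultimately show ?thesis
    using assms unfolding STS_H_def by blast
qed

lemma blocks_image_comp: "blocks_image (f \<circ> g) S = blocks_image f (blocks_image g S)"
  by (auto simp: blocks_image_def image_comp)

lemma blocks_image_inv: "inj f \<Longrightarrow> blocks_image (inv f) (blocks_image f S) = S"
  by (simp add: blocks_image_def image_comp image_inv_f_f)

lemma blocks_image_cong: "(\<And>x. x \<in> \<Union>S \<Longrightarrow> f x = g x) \<Longrightarrow> blocks_image f S = blocks_image g S"
  unfolding blocks_image_def by (intro image_cong refl) auto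

lemma additive_if_preserves_STS_H:
  fixes g :: "bit ^ 'm \<Rightarrow> bit ^ 'm"
  assumes "inj g" "g 0 = 0" and preserves: "blocks_image g STS_H \<subseteq> STS_H"
  shows "Modules.additive g"
proof
  fix a b :: "bit ^ 'm"
  show "g (a + b) = g a + g b"
  proof (cases "a = 0 \<or> b = 0 \<or> a = b")
    case True
    then show ?thesis using \<open>g 0 = 0\<close> by auto
  next
    case False
    then have g_distinct: "g a \<noteq> g b" "g a \<noteq> g (a + b)" "g b \<noteq> g (a + b)"
      using \<open>inj g\<close> by (auto simp: inj_eq)
    have "g ` {a, b, a + b} \<in> STS_H"
      using preserves line_in_STS_H[of a b] False unfolding blocks_image_def by blast
    from sum_STS_H_block[OF this] have "g a + g b + g (a + b) = 0"
      using g_distinct by (simp add: add.assoc)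
    then show ?thesis
      by (simp add: vec_bit_add_eq_0_iff)
  qed
qed

lemma additive_sum_eq_0_iff:
  assumes "Modules.additive g" "inj g"
  shows "(\<Sum>x\<in>A. g (f x)) = 0 \<longleftrightarrow> (\<Sum>x\<in>A. f x) = 0"
  using additive.sum[OF assms(1)] additive.zero[OF assms(1)] injD[OF assms(2)] by metis

lemma sum_eq_0_iff_if_preserves_STS_H:
  fixes g :: "bit ^ 'm \<Rightarrow> bit ^ 'm"
  assumes "inj g" "g 0 = 0" "blocks_image g STS_H = STS_H"
  shows "(\<Sum>x\<in>A. g (f x)) = 0 \<longleftrightarrow> (\<Sum>x\<in>A. f x) = 0"
  using additive_if_preserves_STS_H additive_sum_eq_0_iff assms by (metis order_refl)

lemma zero_notin_blocks_image_STS_H: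
  fixes F :: "bit ^ 'm \<Rightarrow> 'a::zero"
  assumes "inj F" "F 0 = 0"
  shows "0 \<notin> \<Union> (blocks_image F STS_H)"
proof -
  have "0 \<notin> F ` B" if "B \<in> STS_H" for B
    using zero_notin_STS_H[OF that] assms by (metis image_iff injD)
  then show ?thesis
    unfolding blocks_image_def by blast
qed

lemma bij_betw_nonzero_vecs: "bij f \<Longrightarrow> f 0 = 0 \<Longrightarrow> bij_betw f nonzero_vecs nonzero_vecs"
  unfolding nonzero_vecs_def by (rule bij_betw_DiffI) (auto simp: bij_betw_def)

lemma surj_image_Collect_image_mem: "surj f \<Longrightarrow> (\<lambda>A. f ` A) ` {A. f ` A \<in> C} = C"
  by (auto simp: image_iff intro!: exI[of _ "f -` B" for B])

lemma image_mem_code_F_iff: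
  assumes "bij \<pi>" "\<pi> 0 = 0"
  shows "\<pi> ` A \<in> code_F F \<longleftrightarrow>
    A \<subseteq> nonzero_vecs \<and> (\<Sum>x\<in>A. \<pi> x) = 0 \<and> (\<Sum>x\<in>A. F (\<pi> x)) = 0"
proof -
  have "inj \<pi>"
    using assms(1) by (rule bij_is_inj)
  then have "\<pi> ` A \<subseteq> nonzero_vecs \<longleftrightarrow> A \<subseteq> nonzero_vecs"
    using assms(2) by (auto simp: nonzero_vecs_def inj_eq[symmetric])
  then show ?thesis
    using \<open>inj \<pi>\<close> by (simp add: code_F_def sum.reindex inj_on_subset[OF \<open>inj \<pi>\<close>])
qed

lemma code_F_eq_image:
  assumes "bij \<pi>" "\<pi> 0 = 0"
    and checks: "\<And>A. (\<Sum>x\<in>A. \<pi> x) = 0 \<and> (\<Sum>x\<in>A. F2 (\<pi> x)) = 0 \<longleftrightarrow>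
                     (\<Sum>x\<in>A. x) = 0 \<and> (\<Sum>x\<in>A. F1 x) = 0"
  shows "code_F F2 = (\<lambda>A. \<pi> ` A) ` code_F F1"
proof -
  have "\<pi> ` A \<in> code_F F2 \<longleftrightarrow> A \<in> code_F F1" for A
    by (subst image_mem_code_F_iff[OF assms(1,2)]) (use checks[of A] in \<open>auto simp: code_F_def\<close>)
  then have "{A. \<pi> ` A \<in> code_F F2} = code_F F1"
    by blast
  then show ?thesis
    using surj_image_Collect_image_mem[of \<pi> "code_F F2"] bij_is_surj[OF assms(1)] by simp
qed

lemma codes_equiv_by_permutation:
  "bij_betw \<pi> N N \<Longrightarrow> C2 = (\<lambda>A. \<pi> ` A) ` C1 \<Longrightarrow> codes_equiv N C1 C2"
  unfolding codes_equiv_def by (intro exI[of _ \<pi>] exI[of _ "{}"]) simp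

definition self_emb_isomorphism ::
    "(bit ^ 'm \<Rightarrow> bit ^ 'm) \<Rightarrow> (bit ^ 'm \<Rightarrow> bit ^ 'm) \<Rightarrow> (bit ^ 'm \<Rightarrow> bit ^ 'm) \<Rightarrow> bool"
  where "self_emb_isomorphism \<sigma> F1 F2 \<longleftrightarrow>
    (blocks_image \<sigma> STS_H = STS_H \<and>
      blocks_image \<sigma> (blocks_image F1 STS_H) = blocks_image F2 STS_H) \<or>
    (blocks_image \<sigma> STS_H = blocks_image F2 STS_H \<and>
      blocks_image \<sigma> (blocks_image F1 STS_H) = STS_H)"

lemma self_emb_iso_obtains_bij:
  fixes F1 F2 :: "bit ^ 'm \<Rightarrow> bit ^ 'm"
  assumes "inj F1" "F1 0 = 0" "self_emb_iso F1 F2"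
  obtains \<sigma> where "bij \<sigma>" "\<sigma> 0 = 0" "self_emb_isomorphism \<sigma> F1 F2"
proof -
  obtain \<sigma> where \<sigma>: "bij_betw \<sigma> nonzero_vecs nonzero_vecs" "self_emb_isomorphism \<sigma> F1 F2"
    using assms(3) unfolding self_emb_iso_def self_emb_isomorphism_def by blast
  define \<sigma>\<^sub>0 where "\<sigma>\<^sub>0 = \<sigma>(0 := 0)"
  have "bij_betw \<sigma>\<^sub>0 nonzero_vecs nonzero_vecs"
    using \<sigma>(1) by (subst bij_betw_cong[of _ _ \<sigma>]) (auto simp: \<sigma>\<^sub>0_def nonzero_vecs_def)
  moreover have "bij_betw \<sigma>\<^sub>0 {0} {0}"
    by (simp add: \<sigma>\<^sub>0_def bij_betw_def)
  ultimately have "bij_betw \<sigma>\<^sub>0 (nonzero_vecs \<union> {0}) (nonzero_vecs \<union> {0})"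
    by (rule bij_betw_combine) (simp add: nonzero_vecs_def)
  then have "bij \<sigma>\<^sub>0"
    by (simp add: nonzero_vecs_def)
  moreover have "\<sigma>\<^sub>0 0 = 0"
    by (simp add: \<sigma>\<^sub>0_def)
  moreover have "blocks_image \<sigma>\<^sub>0 S = blocks_image \<sigma> S" if "0 \<notin> \<Union>S" for S
    using that by (intro blocks_image_cong) (auto simp: \<sigma>\<^sub>0_def)
  then have "blocks_image \<sigma>\<^sub>0 STS_H = blocks_image \<sigma> STS_H"
    "blocks_image \<sigma>\<^sub>0 (blocks_image F1 STS_H) = blocks_image \<sigma> (blocks_image F1 STS_H)"
    using zero_notin_STS_H zero_notin_blocks_image_STS_H[OF assms(1,2)] by blast+
  ultimately show ?thesis
    using that[of \<sigma>\<^sub>0] \<sigma>(2) by (simp add: self_emb_isomorphism_def)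
qed

lemma code_F_eq_image_of_self_emb_isomorphism:
  fixes F1 F2 \<sigma> :: "bit ^ 'm \<Rightarrow> bit ^ 'm"
  assumes "bij F1" "bij F2" "bij \<sigma>" "F1 0 = 0" "F2 0 = 0" "\<sigma> 0 = 0"
    and "self_emb_isomorphism \<sigma> F1 F2"
  defines "\<pi> \<equiv> inv F2 \<circ> \<sigma> \<circ> F1"
  shows "bij \<pi>" "\<pi> 0 = 0" "code_F F2 = (\<lambda>A. \<pi> ` A) ` code_F F1"
proof -
  have inv_F2: "bij (inv F2)" "inv F2 0 = 0"
    using assms(2,5) by (auto simp: bij_imp_bij_inv bij_inv_eq_iff[symmetric])
  have inj: "inj F1" "inj \<sigma>" "inj (inv F2)"
    using assms(1,3) inv_F2 by (simp_all add: bij_is_inj)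
  have F2_\<pi>: "F2 (\<pi> x) = \<sigma> (F1 x)" for x
    using assms(2) by (simp add: \<pi>_def bij_is_surj surj_f_inv_f)
  have inv_F2_cancel: "blocks_image (inv F2) (blocks_image F2 STS_H) = STS_H"
    using assms(2) by (simp add: blocks_image_inv bij_is_inj)
  show "bij \<pi>" "\<pi> 0 = 0"
    using assms inv_F2 by (simp_all add: \<pi>_def bij_comp)
  then show "code_F F2 = (\<lambda>A. \<pi> ` A) ` code_F F1"
  proof (rule code_F_eq_image)
    fix A :: "(bit ^ 'm) set"
    from \<open>self_emb_isomorphism \<sigma> F1 F2\<close>
    show "(\<Sum>x\<in>A. \<pi> x) = 0 \<and> (\<Sum>x\<in>A. F2 (\<pi> x)) = 0 \<longleftrightarrow>
          (\<Sum>x\<in>A. x) = 0 \<and> (\<Sum>x\<in>A. F1 x) = 0"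
      unfolding self_emb_isomorphism_def
    proof
      assume c: "blocks_image \<sigma> STS_H = STS_H \<and>
        blocks_image \<sigma> (blocks_image F1 STS_H) = blocks_image F2 STS_H"
      then have "blocks_image \<pi> STS_H = STS_H"
        using inv_F2_cancel by (simp add: \<pi>_def blocks_image_comp)
      then have "(\<Sum>x\<in>A. \<pi> x) = 0 \<longleftrightarrow> (\<Sum>x\<in>A. x) = 0"
        using sum_eq_0_iff_if_preserves_STS_H[of \<pi> "\<lambda>x. x"] \<open>bij \<pi>\<close> \<open>\<pi> 0 = 0\<close>
        by (simp add: bij_is_inj)
      moreover have "(\<Sum>x\<in>A. \<sigma> (F1 x)) = 0 \<longleftrightarrow> (\<Sum>x\<in>A. F1 x) = 0"
        using sum_eq_0_iff_if_preserves_STS_H[of \<sigma> F1] inj c assms(6) by simp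
      ultimately show ?thesis
        by (simp add: F2_\<pi>)
    next
      assume c: "blocks_image \<sigma> STS_H = blocks_image F2 STS_H \<and>
        blocks_image \<sigma> (blocks_image F1 STS_H) = STS_H"
      then have "blocks_image (inv F2 \<circ> \<sigma>) STS_H = STS_H"
        using inv_F2_cancel by (simp add: blocks_image_comp)
      then have "(\<Sum>x\<in>A. \<pi> x) = 0 \<longleftrightarrow> (\<Sum>x\<in>A. F1 x) = 0"
        using sum_eq_0_iff_if_preserves_STS_H[of "inv F2 \<circ> \<sigma>" F1] inj inv_F2 assms(6)
        by (simp add: \<pi>_def inj_compose)
      moreover have "blocks_image (\<sigma> \<circ> F1) STS_H = STS_H"
        using c by (simp add: blocks_image_comp)
      then have "(\<Sum>x\<in>A. \<sigma> (F1 x)) = 0 \<longleftrightarrow> (\<Sum>x\<in>A. x) = 0"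
        using sum_eq_0_iff_if_preserves_STS_H[of "\<sigma> \<circ> F1" "\<lambda>x. x"] inj assms(4,6)
        by (simp add: inj_compose)
      ultimately show ?thesis
        by (auto simp: F2_\<pi>)
    qed
  qed
qed

theorem mainTheorem11:
  fixes F1 F2 :: "bit ^ 'm \<Rightarrow> bit ^ 'm"
  assumes "bij F1" and "bij F2" and "F1 0 = 0" and "F2 0 = 0"
    and "self_emb_iso F1 F2"
  shows "codes_equiv nonzero_vecs (code_F F1) (code_F F2)"
proof -
  obtain \<sigma> where "bij \<sigma>" "\<sigma> 0 = 0" "self_emb_isomorphism \<sigma> F1 F2"
    using self_emb_iso_obtains_bij[OF bij_is_inj[OF assms(1)] assms(3,5)] by blast
  note \<pi> = code_F_eq_image_of_self_emb_isomorphism[OF assms(1,2) \<open>bij \<sigma>\<close> assms(3,4) \<open>\<sigma> 0 = 0\<close>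
      \<open>self_emb_isomorphism \<sigma> F1 F2\<close>]
  show ?thesis
    using codes_equiv_by_permutation[OF bij_betw_nonzero_vecs[OF \<pi>(1,2)] \<pi>(3)] .
qed

end
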